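(* Let $(X,T)$ be a minimal topological dynamical system with $X$ compact metrisable and $T$ abelian, with maximal equicontinuous factor map $\pi:X\to X_{max}$, and let $e$ be a minimal idempotent of its Ellis semigroup. Let $f\in\Gamma_e$ with $f\neq e$. Then $\emptyset\neq\mathrm{supp}(f)\subseteq X_{max}^{sing}$.
   Context: The Ellis semigroup $E$ is the closure of the set of homeomorphisms $\{\alpha^t:t\in T\}$ in $X^X$ (pointwise convergence, composition as product); $\ker E$ is its smallest two-sided ideal, minimal idempotents are idempotents of $\ker E$, $J_{min}$ is the set of them. ${\mathcal H}_e=eEe$ is the structure group and $\Gamma_e$ is the subgroup of ${\mathcal H}_e$ generated by $eJ_{min}e$. For $f\in{\mathcal H}_e$ and $\xi\in X_{max}$, $f$ acts trivially at $\xi$ if every point of $e(\pi^{-1}(\xi))$ is fixed by $f$; $\mathrm{supp}(f)$ is the set of $\xi\in X_{max}$ at which $f$ does not act trivially. Two points are proximal if $\inf_t d(\alpha^t x,\alpha^t y)=0$. A point $\xi\in X_{max}$ is regular if all points of $\pi^{-1}(\xi)$ are distal (proximal to no other point), and $X_{max}^{sing}$ is the set of non-regular (singular) points. *)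

theory Defs
  imports "HOL-Analysis.Analysis"
begin

definition tds :: "('g::ab_group_add \<Rightarrow> 'a::metric_space \<Rightarrow> 'a) \<Rightarrow> bool" where
  "tds \<alpha> \<longleftrightarrow> compact (UNIV :: 'a set) \<and> \<alpha> 0 = id \<and>
     (\<forall>s t. \<alpha> (s + t) = \<alpha> s \<circ> \<alpha> t) \<and> (\<forall>t. continuous_on UNIV (\<alpha> t))"

definition minimal_tds :: "('g::ab_group_add \<Rightarrow> 'a::metric_space \<Rightarrow> 'a) \<Rightarrow> bool" where
  "minimal_tds \<alpha> \<longleftrightarrow> tds \<alpha> \<and> (\<forall>x. closure (range (\<lambda>t. \<alpha> t x)) = UNIV)"

definition equicontinuous_on :: "'b::metric_space set \<Rightarrow> ('g \<Rightarrow> 'b \<Rightarrow> 'b) \<Rightarrow> bool" where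
  "equicontinuous_on Z \<gamma> \<longleftrightarrow> (\<forall>z\<in>Z. \<forall>\<epsilon>>0. \<exists>\<delta>>0. \<forall>z'\<in>Z. dist z z' < \<delta> \<longrightarrow>
      (\<forall>t. dist (\<gamma> t z) (\<gamma> t z') < \<epsilon>))"

definition equicontinuous_factor ::
  "('g::ab_group_add \<Rightarrow> 'a::metric_space \<Rightarrow> 'a) \<Rightarrow> 'b::metric_space set \<Rightarrow> ('g \<Rightarrow> 'b \<Rightarrow> 'b) \<Rightarrow> ('a \<Rightarrow> 'b) \<Rightarrow> bool" where
  "equicontinuous_factor \<alpha> Z \<gamma> \<rho> \<longleftrightarrow> compact Z \<and>
     (\<forall>t. \<gamma> t ` Z \<subseteq> Z \<and> continuous_on Z (\<gamma> t)) \<and> (\<forall>z\<in>Z. \<gamma> 0 z = z) \<and>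
     (\<forall>s t. \<forall>z\<in>Z. \<gamma> (s + t) z = \<gamma> s (\<gamma> t z)) \<and>
     continuous_on UNIV \<rho> \<and> range \<rho> = Z \<and> (\<forall>t x. \<rho> (\<alpha> t x) = \<gamma> t (\<rho> x)) \<and>
     equicontinuous_on Z \<gamma>"

text \<open>Every compact
  metrisable space embeds into the Hilbert cube, so it suffices to test factors whose
  phase space is a compact subset of \<open>nat \<Rightarrow> real\<close> (product topology).\<close>
definition max_equicontinuous_factor ::
  "('g::ab_group_add \<Rightarrow> 'a::metric_space \<Rightarrow> 'a) \<Rightarrow> ('g \<Rightarrow> 'b::metric_space \<Rightarrow> 'b) \<Rightarrow> ('a \<Rightarrow> 'b) \<Rightarrow> bool" where
  "max_equicontinuous_factor \<alpha> \<beta> \<pi> \<longleftrightarrow> equicontinuous_factor \<alpha> UNIV \<beta> \<pi> \<and>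
     (\<forall>(Z :: (nat \<Rightarrow> real) set) \<gamma> \<rho>. equicontinuous_factor \<alpha> Z \<gamma> \<rho> \<longrightarrow>
        (\<exists>\<psi>. continuous_on UNIV \<psi> \<and> (\<forall>x. \<rho> x = \<psi> (\<pi> x))))"

text \<open>Ellis semigroup: closure of \<open>{\<alpha> t}\<close> in \<open>X^X\<close> (pointwise convergence), product = composition.\<close>
definition ellis :: "('g \<Rightarrow> 'a::topological_space \<Rightarrow> 'a) \<Rightarrow> ('a \<Rightarrow> 'a) set" where
  "ellis \<alpha> = closure (range \<alpha>)"

definition two_sided_ideal :: "('a \<Rightarrow> 'a) set \<Rightarrow> ('a \<Rightarrow> 'a) set \<Rightarrow> bool" where
  "two_sided_ideal E I \<longleftrightarrow> I \<noteq> {} \<and> I \<subseteq> E \<and> (\<forall>p\<in>E. \<forall>q\<in>I. p \<circ> q \<in> I \<and> q \<circ> p \<in> I)"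

definition ker_ellis :: "('g \<Rightarrow> 'a::topological_space \<Rightarrow> 'a) \<Rightarrow> ('a \<Rightarrow> 'a) set" where
  "ker_ellis \<alpha> = \<Inter> {I. two_sided_ideal (ellis \<alpha>) I}"

definition J_min :: "('g \<Rightarrow> 'a::topological_space \<Rightarrow> 'a) \<Rightarrow> ('a \<Rightarrow> 'a) set" where
  "J_min \<alpha> = {u \<in> ker_ellis \<alpha>. u \<circ> u = u}"

definition struct_group :: "('g \<Rightarrow> 'a::topological_space \<Rightarrow> 'a) \<Rightarrow> ('a \<Rightarrow> 'a) \<Rightarrow> ('a \<Rightarrow> 'a) set" where
  "struct_group \<alpha> e = {e \<circ> p \<circ> e | p. p \<in> ellis \<alpha>}"

inductive_set Gamma :: "('g \<Rightarrow> 'a::topological_space \<Rightarrow> 'a) \<Rightarrow> ('a \<Rightarrow> 'a) \<Rightarrow> ('a \<Rightarrow> 'a) set"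
  for \<alpha> e where
    unit: "e \<in> Gamma \<alpha> e"
  | gen: "u \<in> J_min \<alpha> \<Longrightarrow> e \<circ> u \<circ> e \<in> Gamma \<alpha> e"
  | mult: "f \<in> Gamma \<alpha> e \<Longrightarrow> g \<in> Gamma \<alpha> e \<Longrightarrow> f \<circ> g \<in> Gamma \<alpha> e"
  | inv: "f \<in> Gamma \<alpha> e \<Longrightarrow> g \<in> struct_group \<alpha> e \<Longrightarrow> f \<circ> g = e \<Longrightarrow> g \<circ> f = e \<Longrightarrow> g \<in> Gamma \<alpha> e"

definition supp :: "('a \<Rightarrow> 'b) \<Rightarrow> ('a \<Rightarrow> 'a) \<Rightarrow> ('a \<Rightarrow> 'a) \<Rightarrow> 'b set" where
  "supp \<pi> e f = {\<xi>. \<not> (\<forall>x \<in> e ` (\<pi> -` {\<xi>}). f x = x)}"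

definition proximal :: "('g \<Rightarrow> 'a::metric_space \<Rightarrow> 'a) \<Rightarrow> 'a \<Rightarrow> 'a \<Rightarrow> bool" where
  "proximal \<alpha> x y \<longleftrightarrow> (INF t. dist (\<alpha> t x) (\<alpha> t y)) = 0"

definition distal_point :: "('g \<Rightarrow> 'a::metric_space \<Rightarrow> 'a) \<Rightarrow> 'a \<Rightarrow> bool" where
  "distal_point \<alpha> x \<longleftrightarrow> (\<forall>y. proximal \<alpha> x y \<longrightarrow> y = x)"

definition regular_point :: "('g \<Rightarrow> 'a::metric_space \<Rightarrow> 'a) \<Rightarrow> ('a \<Rightarrow> 'b) \<Rightarrow> 'b \<Rightarrow> bool" where
  "regular_point \<alpha> \<pi> \<xi> \<longleftrightarrow> (\<forall>x \<in> \<pi> -` {\<xi>}. distal_point \<alpha> x)"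

definition singular_set :: "('g \<Rightarrow> 'a::metric_space \<Rightarrow> 'a) \<Rightarrow> ('a \<Rightarrow> 'b) \<Rightarrow> 'b set" where
  "singular_set \<alpha> \<pi> = {\<xi>. \<not> regular_point \<alpha> \<pi> \<xi>}"

end

theory Submission
  imports Defs
begin

text \<open>If an element \<open>p\<close> of the Ellis semigroup identifies two points, they are proximal,
  since \<open>p\<close> is a pointwise limit of the \<open>\<alpha> t\<close>.  For a minimal idempotent \<open>u\<close> the points
  \<open>x\<close> and \<open>u x\<close> are identified by \<open>u\<close>, so \<open>u\<close> fixes every distal point; the generators of
  \<open>\<Gamma>\<^sub>e\<close> and hence all of \<open>\<Gamma>\<^sub>e\<close> then fix every distal point, so \<open>f\<close> acts trivially over
  regular points.  On the other hand \<open>f \<circ> e = f \<noteq> e\<close>, so \<open>f\<close> moves some point of \<open>e X\<close>.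
  Only the fibres of \<open>\<pi>\<close> enter.\<close>

lemma ellis_eq_imp_proximal:
  fixes \<alpha> :: "'g \<Rightarrow> 'a::metric_space \<Rightarrow> 'a"
  assumes p: "p \<in> ellis \<alpha>" and eq: "p y = p z"
  shows "proximal \<alpha> y z"
proof -
  have bdd: "bdd_below (range (\<lambda>t. dist (\<alpha> t y) (\<alpha> t z)))"
    by (rule bdd_belowI[of _ 0]) auto
  have le_eps: "(INF t. dist (\<alpha> t y) (\<alpha> t z)) \<le> \<epsilon>" if "\<epsilon> > 0" for \<epsilon>
  proof -
    define S where "S = (\<lambda>h. h y) -` ball (p y) (\<epsilon>/2) \<inter> (\<lambda>h. h z) -` ball (p z) (\<epsilon>/2)"
    have "open S" unfolding S_def
      by (intro open_Int open_vimage open_ball continuous_on_product_coordinates)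
    moreover have "p \<in> S" using \<open>\<epsilon> > 0\<close> by (simp add: S_def)
    ultimately have "range \<alpha> \<inter> S \<noteq> {}"
      using p unfolding ellis_def closure_iff_nhds_not_empty by blast
    then obtain t where "dist (p y) (\<alpha> t y) < \<epsilon>/2" "dist (p z) (\<alpha> t z) < \<epsilon>/2"
      by (auto simp: S_def)
    then have "dist (\<alpha> t y) (\<alpha> t z) \<le> \<epsilon>"
      using eq dist_triangle[of "\<alpha> t y" "\<alpha> t z" "p y"] by (simp add: dist_commute)
    then show ?thesis by (rule cINF_lower2[OF bdd UNIV_I])
  qed
  have "(INF t. dist (\<alpha> t y) (\<alpha> t z)) \<le> 0"
    using le_eps by (meson dense not_le)
  moreover have "(INF t. dist (\<alpha> t y) (\<alpha> t z)) \<ge> 0"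
    by (rule cINF_greatest) auto
  ultimately show ?thesis unfolding proximal_def by simp
qed

lemma ellis_idempotent_fixes_distal_point:
  fixes \<alpha> :: "'g \<Rightarrow> 'a::metric_space \<Rightarrow> 'a"
  assumes "u \<in> ellis \<alpha>" and "u \<circ> u = u" and "distal_point \<alpha> x"
  shows "u x = x"
proof -
  have "u x = u (u x)" using \<open>u \<circ> u = u\<close> by (metis comp_apply)
  then have "proximal \<alpha> x (u x)" by (rule ellis_eq_imp_proximal[OF \<open>u \<in> ellis \<alpha>\<close>])
  then show ?thesis using \<open>distal_point \<alpha> x\<close> unfolding distal_point_def by metis
qed

lemma ellis_comp_closed:
  fixes \<alpha> :: "'g::plus \<Rightarrow> 'a::topological_space \<Rightarrow> 'a"
  assumes add: "\<And>s t. \<alpha> (s + t) = \<alpha> s \<circ> \<alpha> t"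
    and cont: "\<And>t. continuous_on UNIV (\<alpha> t)"
    and "p \<in> ellis \<alpha>" and "q \<in> ellis \<alpha>"
  shows "p \<circ> q \<in> ellis \<alpha>"
proof -
  have left_closed: "\<alpha> s \<circ> r \<in> ellis \<alpha>" if "r \<in> ellis \<alpha>" for s r
  proof -
    have "continuous_on UNIV (\<lambda>h::'a \<Rightarrow> 'a. \<alpha> s \<circ> h)"
    proof (rule continuous_on_coordinatewise_then_product)
      fix i
      show "continuous_on UNIV (\<lambda>h::'a \<Rightarrow> 'a. (\<alpha> s \<circ> h) i)"
        unfolding o_def
        by (rule continuous_on_compose2[OF cont continuous_on_product_coordinates]) auto
    qed
    then have "(\<lambda>h. \<alpha> s \<circ> h) ` closure (range \<alpha>) \<subseteq> closure (range \<alpha>)"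
      by (intro image_closure_subset)
        (auto intro: continuous_on_subset simp: add[symmetric] closure_subset[THEN subsetD])
    then show ?thesis using that unfolding ellis_def by blast
  qed
  have "continuous_on UNIV (\<lambda>h::'a \<Rightarrow> 'a. h \<circ> q)"
    by (intro continuous_on_coordinatewise_then_product) (simp add: o_def)
  then have "(\<lambda>h. h \<circ> q) ` closure (range \<alpha>) \<subseteq> closure (range \<alpha>)"
    by (intro image_closure_subset)
      (use left_closed \<open>q \<in> ellis \<alpha>\<close> in \<open>auto intro: continuous_on_subset simp: ellis_def\<close>)
  then show ?thesis using \<open>p \<in> ellis \<alpha>\<close> unfolding ellis_def by blast
qed

lemma ker_ellis_subset_ellis:
  fixes \<alpha> :: "'g::plus \<Rightarrow> 'a::topological_space \<Rightarrow> 'a"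
  assumes "\<And>s t. \<alpha> (s + t) = \<alpha> s \<circ> \<alpha> t" and "\<And>t. continuous_on UNIV (\<alpha> t)"
  shows "ker_ellis \<alpha> \<subseteq> ellis \<alpha>"
proof -
  have "two_sided_ideal (ellis \<alpha>) (ellis \<alpha>)"
    unfolding two_sided_ideal_def using ellis_comp_closed[OF assms]
    by (auto simp: ellis_def dest: closure_subset[THEN subsetD])
  then show ?thesis unfolding ker_ellis_def by blast
qed

lemma J_min_fixes_distal_point:
  fixes \<alpha> :: "'g::ab_group_add \<Rightarrow> 'a::metric_space \<Rightarrow> 'a"
  assumes "tds \<alpha>" and "u \<in> J_min \<alpha>" and "distal_point \<alpha> x"
  shows "u x = x"
proof -
  have "ker_ellis \<alpha> \<subseteq> ellis \<alpha>"
    using \<open>tds \<alpha>\<close> by (intro ker_ellis_subset_ellis) (auto simp: tds_def)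
  then show ?thesis
    using assms(2,3) unfolding J_min_def by (blast intro: ellis_idempotent_fixes_distal_point)
qed

lemma Gamma_comp_unit:
  assumes "e \<circ> e = e" and "f \<in> Gamma \<alpha> e"
  shows "f \<circ> e = f"
  using assms(2)
proof induction
  case unit
  show ?case using assms(1) .
next
  case (gen u)
  show ?case using assms(1) by (metis comp_assoc)
next
  case (mult f g)
  then show ?case by (metis comp_assoc)
next
  case (inv f g)
  then obtain p where "g = e \<circ> p \<circ> e" by (auto simp: struct_group_def)
  then show ?case using assms(1) by (metis comp_assoc)
qed

lemma Gamma_fixes_common_fixed_point:
  assumes "e x = x" and "\<And>u. u \<in> J_min \<alpha> \<Longrightarrow> u x = x" and "f \<in> Gamma \<alpha> e"
  shows "f x = x"
  using assms(3)
proof induction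
  case unit
  show ?case using assms(1) .
next
  case (gen u)
  then show ?case using assms(1) assms(2)[OF gen] by simp
next
  case (mult f g)
  then show ?case by simp
next
  case (inv f g)
  have "g x = g (f x)" using inv.IH by simp
  also have "\<dots> = e x" using \<open>g \<circ> f = e\<close> by (metis comp_apply)
  finally show ?case using assms(1) by simp
qed

lemma supp_eq_empty_iff: "supp \<pi> e f = {} \<longleftrightarrow> f \<circ> e = e"
  by (auto simp: supp_def fun_eq_iff)

lemma supp_subset_singular_set:
  fixes \<alpha> :: "'g::ab_group_add \<Rightarrow> 'a::metric_space \<Rightarrow> 'a"
  assumes "tds \<alpha>" and "e \<in> J_min \<alpha>" and "f \<in> Gamma \<alpha> e"
  shows "supp \<pi> e f \<subseteq> singular_set \<alpha> \<pi>"
proof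
  fix \<xi> assume "\<xi> \<in> supp \<pi> e f"
  then obtain x where x: "\<pi> x = \<xi>" "f (e x) \<noteq> e x" unfolding supp_def by auto
  show "\<xi> \<in> singular_set \<alpha> \<pi>"
  proof (rule ccontr)
    assume "\<xi> \<notin> singular_set \<alpha> \<pi>"
    then have distal: "distal_point \<alpha> x"
      using x(1) by (auto simp: singular_set_def regular_point_def)
    have "e x = x" using J_min_fixes_distal_point[OF assms(1,2) distal] .
    moreover have "f x = x"
      using Gamma_fixes_common_fixed_point[OF \<open>e x = x\<close> _ assms(3)]
        J_min_fixes_distal_point[OF assms(1) _ distal] .
    ultimately show False using x(2) by simp
  qed
qed

theorem mainTheorem4:
  fixes \<alpha> :: "'g::ab_group_add \<Rightarrow> 'a::metric_space \<Rightarrow> 'a"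
    and \<beta> :: "'g \<Rightarrow> 'b::metric_space \<Rightarrow> 'b"
    and \<pi> :: "'a \<Rightarrow> 'b"
    and e f :: "'a \<Rightarrow> 'a"
  assumes "minimal_tds \<alpha>"
    and "max_equicontinuous_factor \<alpha> \<beta> \<pi>"
    and "e \<in> J_min \<alpha>"
    and "f \<in> Gamma \<alpha> e"
    and "f \<noteq> e"
  shows "supp \<pi> e f \<noteq> {} \<and> supp \<pi> e f \<subseteq> singular_set \<alpha> \<pi>"
proof
  have "tds \<alpha>" using assms(1) by (simp add: minimal_tds_def)
  have "e \<circ> e = e" using assms(3) by (simp add: J_min_def)
  then have "f \<circ> e = f" using assms(4) by (rule Gamma_comp_unit)
  then show "supp \<pi> e f \<noteq> {}"
    using \<open>f \<noteq> e\<close> by (simp add: supp_eq_empty_iff)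
  show "supp \<pi> e f \<subseteq> singular_set \<alpha> \<pi>"
    using supp_subset_singular_set[OF \<open>tds \<alpha>\<close> assms(3,4)] .
qed

end
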